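(* For every space $\mathcal{BL}_F(\{\mathcal{F}_1,\dots,\mathcal{F}_{B_{\mathcal{G}}}\})$ of jointly bandlimited FTVGS with joint bandwidth $B$, there exists a stable sampling set $\mathcal{S}\subseteq\mathcal{V}_{\mathcal{G}}\times\mathcal{V}_{\mathcal{T}}$ (allowing perfect reconstruction of every $\mathbf{X}$ in the space from $\{\mathbf{X}(v,n):(v,n)\in\mathcal{S}\}$) with $|\mathcal{S}|=B$, i.e. total sampling ratio $R_F(\mathcal{S})=B/(NT)$, and with vertex projection $\mathcal{S}_{\mathcal{G}}=\{v:(v,n)\in\mathcal{S}\}$ satisfying $|\mathcal{S}_{\mathcal{G}}|\le B_{\mathcal{G}}$. Hence critical sampling of jointly bandlimited FTVGS is achievable.
   Context: $\mathcal{G}$ undirected graph with $N$ vertices and orthonormal Laplacian eigenvector matrix $\mathbf{U}_{\mathcal{G}}$; $\mathcal{V}_{\mathcal{T}}=\{1,\dots,T\}$ with $\mathbf{U}_{\mathcal{T}}$ the $T\times T$ unitary normalized DFT matrix $\mathbf{U}_{\mathcal{T}}^H(n,m)=T^{-1/2}e^{-j2\pi(m-1)n/T}$. FTVGS $\mathbf{X}\in\mathbb{C}^{N\times T}$; JFT $\mathcal{F}_{\mathcal{J}}(\mathbf{X})=\mathbf{U}_{\mathcal{G}}^H\mathbf{X}\overline{\mathbf{U}}_{\mathcal{T}}$. $\mathcal{F}_i\subseteq\{1,\dots,T\}$ is the allowed support of row $i$ of the JFT; $\mathcal{I}=\{i:\mathcal{F}_i\ne\emptyset\}$, $B_{\mathcal{G}}=|\mathcal{I}|$,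 joint bandwidth $B=\sum_i|\mathcal{F}_i|<NT$. $\mathcal{BL}_F(\{\mathcal{F}_1,\dots,\mathcal{F}_{B_{\mathcal{G}}}\})=\{\mathbf{X}:\mathcal{F}_{\mathcal{J}}(\mathbf{X})(i,f)=0\ \forall f\notin\mathcal{F}_i\}$. Stability of $\mathcal{S}$: $A\|\mathbf{X}\|^2\le\sum_{(v,n)\in\mathcal{S}}|\mathbf{X}(v,n)|^2\le A'\|\mathbf{X}\|^2$ for some $0<A\le A'<\infty$ and all $\mathbf{X}$ in the space. $R_F(\mathcal{S})=|\mathcal{S}|/(NT)$. *)

theory Defs
  imports Complex_Main
begin

text \<open>Conventions: vertices are 1..N, time instants are 1..T (1-based, as in the paper).
  Matrices are functions nat => nat => _ read on the relevant index ranges.\<close>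

definition undirected_graph :: "nat \<Rightarrow> (nat \<Rightarrow> nat \<Rightarrow> real) \<Rightarrow> bool" where
  "undirected_graph N W \<longleftrightarrow>
     (\<forall>i\<in>{1..N}. \<forall>j\<in>{1..N}. W i j = W j i \<and> W i j \<ge> 0) \<and> (\<forall>i\<in>{1..N}. W i i = 0)"

definition laplacian :: "nat \<Rightarrow> (nat \<Rightarrow> nat \<Rightarrow> real) \<Rightarrow> nat \<Rightarrow> nat \<Rightarrow> real" where
  "laplacian N W i j = (if i = j then (\<Sum>k\<in>{1..N}. W i k) else 0) - W i j"

definition orthonormal_laplacian_eigvecs ::
  "nat \<Rightarrow> (nat \<Rightarrow> nat \<Rightarrow> real) \<Rightarrow> (nat \<Rightarrow> nat \<Rightarrow> real) \<Rightarrow> bool" where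
  "orthonormal_laplacian_eigvecs N W U \<longleftrightarrow>
     (\<forall>i\<in>{1..N}. \<forall>j\<in>{1..N}. (\<Sum>k\<in>{1..N}. U k i * U k j) = (if i = j then 1 else 0)) \<and>
     (\<forall>k\<in>{1..N}. \<exists>lam::real. \<forall>i\<in>{1..N}. (\<Sum>j\<in>{1..N}. laplacian N W i j * U j k) = lam * U i k)"

definition dftH :: "nat \<Rightarrow> nat \<Rightarrow> nat \<Rightarrow> complex" where
  "dftH T n m = complex_of_real (1 / sqrt (real T)) *
                 exp (- \<i> * complex_of_real (2 * pi * (real m - 1) * real n / real T))"

definition dftU :: "nat \<Rightarrow> nat \<Rightarrow> nat \<Rightarrow> complex" where
  "dftU T n m = cnj (dftH T m n)"

text \<open>Joint Fourier transform  F_J(X) = U_G^H X conj(U_T).\<close>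
definition JFT :: "nat \<Rightarrow> nat \<Rightarrow> (nat \<Rightarrow> nat \<Rightarrow> real) \<Rightarrow> (nat \<Rightarrow> nat \<Rightarrow> complex) \<Rightarrow> nat \<Rightarrow> nat \<Rightarrow> complex" where
  "JFT N T U X i f = (\<Sum>v\<in>{1..N}. \<Sum>n\<in>{1..T}.
       cnj (complex_of_real (U v i)) * X v n * cnj (dftU T n f))"

definition BL_F :: "nat \<Rightarrow> nat \<Rightarrow> (nat \<Rightarrow> nat \<Rightarrow> real) \<Rightarrow> (nat \<Rightarrow> nat set) \<Rightarrow> (nat \<Rightarrow> nat \<Rightarrow> complex) set" where
  "BL_F N T U F = {X. (\<forall>v n. (v \<notin> {1..N} \<or> n \<notin> {1..T}) \<longrightarrow> X v n = 0) \<and>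
                      (\<forall>i\<in>{1..N}. \<forall>f\<in>{1..T}. f \<notin> F i \<longrightarrow> JFT N T U X i f = 0)}"

definition sqnorm :: "nat \<Rightarrow> nat \<Rightarrow> (nat \<Rightarrow> nat \<Rightarrow> complex) \<Rightarrow> real" where
  "sqnorm N T X = (\<Sum>v\<in>{1..N}. \<Sum>n\<in>{1..T}. (cmod (X v n))\<^sup>2)"

definition stable_sampling :: "nat \<Rightarrow> nat \<Rightarrow> (nat \<Rightarrow> nat \<Rightarrow> complex) set \<Rightarrow> (nat \<times> nat) set \<Rightarrow> bool" where
  "stable_sampling N T Sp S \<longleftrightarrow> (\<exists>A A'. 0 < A \<and> A \<le> A' \<and>
     (\<forall>X\<in>Sp. A * sqnorm N T X \<le> (\<Sum>(v,n)\<in>S. (cmod (X v n))\<^sup>2) \<and>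
              (\<Sum>(v,n)\<in>S. (cmod (X v n))\<^sup>2) \<le> A' * sqnorm N T X))"

definition joint_bandwidth :: "nat \<Rightarrow> (nat \<Rightarrow> nat set) \<Rightarrow> nat" where
  "joint_bandwidth N F = (\<Sum>i\<in>{1..N}. card (F i))"

definition graph_bandwidth :: "nat \<Rightarrow> (nat \<Rightarrow> nat set) \<Rightarrow> nat" where
  "graph_bandwidth N F = card {i\<in>{1..N}. F i \<noteq> {}}"

definition sampling_ratio :: "nat \<Rightarrow> nat \<Rightarrow> (nat \<times> nat) set \<Rightarrow> real" where
  "sampling_ratio N T S = real (card S) / (real N * real T)"

end

(*
  The joint Fourier atoms U(.,i) u_f with f in F_i, i.e. B functions on the N x T grid, span
  BL_F, and each column X(.,n) of a signal in BL_F lies in the span of the B_G eigenvectors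
  U(.,i) with F_i nonempty.  For any k functions on a finite set D, Gaussian elimination picks
  at most k points of D whose samples bound the l2-norm on D of every linear combination.
  Applied to the B_G eigenvectors on the vertex set this gives a vertex set G with |G| <= B_G;
  applied to the B atoms on G x time it gives at most B samples that bound the energy of every
  signal in BL_F from below.  Enlarging the set to exactly B samples keeps that bound, and the
  upper frame bound 1 is trivial.
*)
theory Submission
  imports Defs "HOL-Analysis.Complex_Transcendental" "Jordan_Normal_Form.Determinant"
begin

definition sqnorm_on :: "'d set \<Rightarrow> ('d \<Rightarrow> 'a::real_normed_vector) \<Rightarrow> real" where
  "sqnorm_on A x = (\<Sum>p\<in>A. (norm (x p))\<^sup>2)"

lemma sqnorm_on_nonneg: "sqnorm_on A x \<ge> 0"
  unfolding sqnorm_on_def by (simp add: sum_nonneg)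

lemma sqnorm_on_cong: "(\<And>p. p \<in> A \<Longrightarrow> x p = y p) \<Longrightarrow> sqnorm_on A x = sqnorm_on A y"
  unfolding sqnorm_on_def by simp

lemma sqnorm_on_mono: "finite B \<Longrightarrow> A \<subseteq> B \<Longrightarrow> sqnorm_on A x \<le> sqnorm_on B x"
  unfolding sqnorm_on_def by (rule sum_mono2) auto

lemma norm_le_sqnorm_on: "finite A \<Longrightarrow> p \<in> A \<Longrightarrow> (norm (x p))\<^sup>2 \<le> sqnorm_on A x"
  unfolding sqnorm_on_def by (rule member_le_sum) auto

lemma sqnorm_on_mult_left:
  fixes x :: "'d \<Rightarrow> 'a::real_normed_div_algebra"
  shows "sqnorm_on A (\<lambda>p. c * x p) = (norm c)\<^sup>2 * sqnorm_on A x"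
  unfolding sqnorm_on_def by (simp add: norm_mult power_mult_distrib sum_distrib_left)

lemma sqnorm_on_add_le: "sqnorm_on A (\<lambda>p. x p + y p) \<le> 2 * sqnorm_on A x + 2 * sqnorm_on A y"
proof -
  have "(norm (x p + y p))\<^sup>2 \<le> 2 * (norm (x p))\<^sup>2 + 2 * (norm (y p))\<^sup>2" for p
  proof -
    have "(norm (x p + y p))\<^sup>2 \<le> (norm (x p) + norm (y p))\<^sup>2"
      by (simp add: norm_triangle_ineq power_mono)
    also have "\<dots> \<le> 2 * (norm (x p))\<^sup>2 + 2 * (norm (y p))\<^sup>2"
      using sum_squares_bound[of "norm (x p)" "norm (y p)"] by (simp add: power2_sum)
    finally show ?thesis .
  qed
  then show ?thesis
    unfolding sqnorm_on_def by (simp add: sum_distrib_left flip: sum.distrib) (rule sum_mono)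
qed

lemma sqnorm_on_Times:
  "sqnorm_on (A \<times> B) (case_prod X) = (\<Sum>n\<in>B. sqnorm_on A (\<lambda>v. X v n))"
proof -
  have "sqnorm_on (A \<times> B) (case_prod X) = (\<Sum>(v, n)\<in>A \<times> B. (norm (X v n))\<^sup>2)"
    unfolding sqnorm_on_def by (simp add: case_prod_unfold)
  also have "\<dots> = (\<Sum>v\<in>A. \<Sum>n\<in>B. (norm (X v n))\<^sup>2)"
    by (rule sum.cartesian_product[symmetric])
  also have "\<dots> = (\<Sum>n\<in>B. \<Sum>v\<in>A. (norm (X v n))\<^sup>2)"
    by (rule sum.swap)
  finally show ?thesis
    by (simp add: sqnorm_on_def)
qed

lemma sqnorm_eq_sqnorm_on: "sqnorm N T X = sqnorm_on ({1..N} \<times> {1..T}) (case_prod X)"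
  unfolding sqnorm_def sqnorm_on_def by (simp add: sum.cartesian_product case_prod_unfold)

lemma sqnorm_on_pivot_bound:
  fixes x y w :: "'d \<Rightarrow> 'a::real_normed_field"
  assumes "finite D" "S \<subseteq> D" "d \<in> D" "w d \<noteq> 0" "C \<ge> 0"
    and decomp: "\<And>p. x p = y p + x d / w d * w p"
    and y_bound: "sqnorm_on D y \<le> C * sqnorm_on S y"
  defines "R \<equiv> sqnorm_on D w / (norm (w d))\<^sup>2"
  shows "sqnorm_on D x \<le> (4 * C * (1 + R) + 2 * R) * sqnorm_on (insert d S) x"
proof -
  define b where "b = x d / w d"
  define M where "M = sqnorm_on (insert d S) x"
  have fin: "finite (insert d S)" using assms(1,2) finite_subset by blast
  have R_nonneg: "R \<ge> 0" unfolding R_def by (simp add: sqnorm_on_nonneg)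
  have xd: "(norm (x d))\<^sup>2 \<le> M" unfolding M_def using fin by (simp add: norm_le_sqnorm_on)
  have xS: "sqnorm_on S x \<le> M" unfolding M_def using fin by (simp add: sqnorm_on_mono subset_insertI)
  have pivot_term: "(norm b)\<^sup>2 * sqnorm_on E w \<le> R * M" if "E \<subseteq> D" for E
  proof -
    have "(norm b)\<^sup>2 * sqnorm_on E w \<le> (norm b)\<^sup>2 * sqnorm_on D w"
      using assms(1) that by (simp add: mult_left_mono sqnorm_on_mono)
    also have "\<dots> = R * (norm (x d))\<^sup>2"
      unfolding b_def R_def using assms(4) by (simp add: norm_divide power_divide)
    also have "\<dots> \<le> R * M" using xd R_nonneg by (rule mult_left_mono)
    finally show ?thesis .
  qed
  have "x p = y p + b * w p" for p
    unfolding b_def by (rule decomp)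
  then have x_eq: "x = (\<lambda>p. y p + b * w p)" and y_eq: "y = (\<lambda>p. x p + - b * w p)"
    by (auto simp: fun_eq_iff)
  have x_bound: "sqnorm_on D x \<le> 2 * sqnorm_on D y + 2 * (R * M)"
  proof -
    have "sqnorm_on D x \<le> 2 * sqnorm_on D y + 2 * ((norm b)\<^sup>2 * sqnorm_on D w)"
      using sqnorm_on_add_le[of D y "\<lambda>p. b * w p"] unfolding x_eq sqnorm_on_mult_left .
    then show ?thesis using pivot_term[OF subset_refl] by linarith
  qed
  have y_bound_S: "sqnorm_on S y \<le> 2 * M + 2 * (R * M)"
  proof -
    have "sqnorm_on S y \<le> 2 * sqnorm_on S x + 2 * ((norm b)\<^sup>2 * sqnorm_on S w)"
      using sqnorm_on_add_le[of S x "\<lambda>p. - b * w p"] unfolding y_eq sqnorm_on_mult_left by simp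
    then show ?thesis using pivot_term[OF assms(2)] xS by linarith
  qed
  have "sqnorm_on D y \<le> C * (2 * M + 2 * (R * M))"
    using y_bound mult_left_mono[OF y_bound_S \<open>C \<ge> 0\<close>] by linarith
  moreover have "2 * (C * (2 * M + 2 * (R * M))) + 2 * (R * M) = (4 * C * (1 + R) + 2 * R) * M"
    by (simp add: algebra_simps)
  ultimately show ?thesis using x_bound unfolding M_def by linarith
qed

lemma exists_norming_subset_span:
  fixes w :: "'j \<Rightarrow> 'd \<Rightarrow> 'a::real_normed_field"
  assumes "finite D" "finite J"
  shows "\<exists>S C. S \<subseteq> D \<and> card S \<le> card J \<and> C \<ge> 0 \<and>
    (\<forall>c. sqnorm_on D (\<lambda>p. \<Sum>j\<in>J. c j * w j p) \<le> C * sqnorm_on S (\<lambda>p. \<Sum>j\<in>J. c j * w j p))"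
  using assms(2)
proof (induction J arbitrary: w rule: finite_induct)
  case empty
  show ?case by (intro exI[of _ "{}"] exI[of _ 0]) (simp add: sqnorm_on_def)
next
  case (insert k J)
  show ?case
  proof (cases "\<forall>p\<in>D. w k p = 0")
    case True
    obtain S C where S: "S \<subseteq> D" "card S \<le> card J" "C \<ge> 0"
      and bound: "\<And>c. sqnorm_on D (\<lambda>p. \<Sum>j\<in>J. c j * w j p) \<le> C * sqnorm_on S (\<lambda>p. \<Sum>j\<in>J. c j * w j p)"
      using insert.IH[of w] by blast
    have "sqnorm_on E (\<lambda>p. \<Sum>j\<in>insert k J. c j * w j p) = sqnorm_on E (\<lambda>p. \<Sum>j\<in>J. c j * w j p)"
      if "E \<subseteq> D" for E c
      by (rule sqnorm_on_cong) (use True that insert.hyps in auto)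
    with S bound insert.hyps show ?thesis
      by (intro exI[of _ S] exI[of _ C]) auto
  next
    case False
    then obtain d where d: "d \<in> D" "w k d \<noteq> 0" by blast
    \<comment> \<open>Eliminate w k: every w' j vanishes at the pivot d, so the value of a combination at d fixes its coefficient of w k.\<close>
    define w' where "w' j p = w j p - w j d / w k d * w k p" for j p
    obtain S C where S: "S \<subseteq> D" "card S \<le> card J" "C \<ge> 0"
      and bound: "\<And>c. sqnorm_on D (\<lambda>p. \<Sum>j\<in>J. c j * w' j p) \<le> C * sqnorm_on S (\<lambda>p. \<Sum>j\<in>J. c j * w' j p)"
      using insert.IH[of w'] by blast
    define R where "R = sqnorm_on D (w k) / (norm (w k d))\<^sup>2"
    have "finite S" using S(1) assms(1) finite_subset by blast
    show ?thesis
    proof (intro exI[of _ "insert d S"] exI[of _ "4 * C * (1 + R) + 2 * R"] conjI allI)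
      show "insert d S \<subseteq> D" using S(1) d(1) by simp
      show "card (insert d S) \<le> card (insert k J)"
        using S(2) insert.hyps \<open>finite S\<close> by (simp add: card_insert_if)
      show "4 * C * (1 + R) + 2 * R \<ge> 0" using S(3) by (simp add: R_def sqnorm_on_nonneg)
      fix c
      have decomp: "(\<Sum>j\<in>insert k J. c j * w j p) =
          (\<Sum>j\<in>J. c j * w' j p) + (\<Sum>j\<in>insert k J. c j * w j d) / w k d * w k p" for p
      proof -
        have "(\<Sum>j\<in>J. c j * w' j p) = (\<Sum>j\<in>J. c j * w j p) - (\<Sum>j\<in>J. c j * w j d) / w k d * w k p"
          by (simp add: w'_def right_diff_distrib sum_subtractf sum_distrib_right sum_divide_distrib mult.assoc)
        then show ?thesis
          using insert.hyps d(2) by (simp add: field_simps)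
      qed
      show "sqnorm_on D (\<lambda>p. \<Sum>j\<in>insert k J. c j * w j p)
          \<le> (4 * C * (1 + R) + 2 * R) * sqnorm_on (insert d S) (\<lambda>p. \<Sum>j\<in>insert k J. c j * w j p)"
        unfolding R_def by (rule sqnorm_on_pivot_bound[OF assms(1) S(1) d S(3) decomp bound])
    qed
  qed
qed

lemma exists_norming_subset:
  fixes w :: "'j \<Rightarrow> 'd \<Rightarrow> 'a::real_normed_field"
  assumes "finite D" "finite J"
    and span: "\<And>x. x \<in> V \<Longrightarrow> \<exists>c. \<forall>p\<in>D. x p = (\<Sum>j\<in>J. c j * w j p)"
  shows "\<exists>S C. S \<subseteq> D \<and> card S \<le> card J \<and> C \<ge> 0 \<and> (\<forall>x\<in>V. sqnorm_on D x \<le> C * sqnorm_on S x)"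
proof -
  obtain S C where S: "S \<subseteq> D" "card S \<le> card J" "C \<ge> 0"
    and bound: "\<And>c. sqnorm_on D (\<lambda>p. \<Sum>j\<in>J. c j * w j p) \<le> C * sqnorm_on S (\<lambda>p. \<Sum>j\<in>J. c j * w j p)"
    using exists_norming_subset_span[OF assms(1,2), of w] by blast
  have "sqnorm_on D x \<le> C * sqnorm_on S x" if x: "x \<in> V" for x
  proof -
    obtain c where c: "\<forall>p\<in>D. x p = (\<Sum>j\<in>J. c j * w j p)" using span[OF x] by blast
    then have "sqnorm_on D x = sqnorm_on D (\<lambda>p. \<Sum>j\<in>J. c j * w j p)"
      and "sqnorm_on S x = sqnorm_on S (\<lambda>p. \<Sum>j\<in>J. c j * w j p)"
      using S(1) by (auto intro: sqnorm_on_cong)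
    with bound show ?thesis by simp
  qed
  with S show ?thesis by blast
qed

lemma dftH_mult_dftU:
  "dftH T f n * dftU T n' f = of_real (1 / real T) * exp (\<i> * of_real (2 * pi * (real n' - real n) / real T)) ^ f"
proof -
  define a where "a m = 2 * pi * (real m - 1) * real f / real T" for m
  have "1 / sqrt (real T) * (1 / sqrt (real T)) = 1 / real T" by simp
  then have scale: "of_real (1 / sqrt (real T)) * of_real (1 / sqrt (real T)) = (of_real (1 / real T) :: complex)"
    by (metis of_real_mult)
  have "dftH T f n * dftU T n' f =
      of_real (1 / sqrt (real T)) * of_real (1 / sqrt (real T)) * (exp (- \<i> * of_real (a n)) * exp (\<i> * of_real (a n')))"
    unfolding dftU_def dftH_def a_def[symmetric] by (simp add: exp_cnj mult_ac)
  also have "\<dots> = of_real (1 / real T) * exp (\<i> * of_real (a n' - a n))"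
    unfolding scale by (simp add: mult_exp_exp algebra_simps)
  also have "a n' - a n = real f * (2 * pi * (real n' - real n) / real T)"
    unfolding a_def by (simp add: diff_divide_distrib[symmetric] algebra_simps)
  finally show ?thesis
    by (simp add: exp_of_nat_mult[symmetric] mult_ac)
qed

lemma exp_two_pi_frac_eq_1_imp_dvd:
  fixes k :: int
  assumes "T > 0" and "exp (\<i> * of_real (2 * pi * of_int k / real T)) = 1"
  shows "int T dvd k"
proof -
  obtain m :: int where "2 * pi * of_int k / real T = of_int (2 * m) * pi"
    using assms(2) unfolding exp_eq_1 by auto
  then have "pi * (2 * of_int k) = pi * (2 * of_int (int T * m))"
    using assms(1) by (simp add: field_simps)
  then have "k = int T * m"
    by (simp only: mult_cancel_left pi_neq_zero of_int_eq_iff) simp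
  then show ?thesis by simp
qed

lemma dft_orthogonality:
  assumes "n \<in> {1..T}" "n' \<in> {1..T}"
  shows "(\<Sum>f\<in>{1..T}. dftH T f n * dftU T n' f) = (if n = n' then 1 else 0)"
proof -
  define k where "k = int n' - int n"
  define z where "z = exp (\<i> * of_real (2 * pi * of_int k / real T))"
  have T: "T > 0" using assms by simp
  have "dftH T f n * dftU T n' f = of_real (1 / real T) * z ^ f" for f
    unfolding dftH_mult_dftU z_def k_def by simp
  then have sum_eq: "(\<Sum>f\<in>{1..T}. dftH T f n * dftU T n' f) = of_real (1 / real T) * (\<Sum>f\<in>{1..T}. z ^ f)"
    by (simp add: sum_distrib_left)
  show ?thesis
  proof (cases "n = n'")
    case True
    then have "z = 1" by (simp add: z_def k_def)
    then show ?thesis unfolding sum_eq using T True by simp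
  next
    case False
    have "z ^ T = exp (\<i> * (of_int k * (of_real pi * 2)))"
      unfolding z_def exp_of_nat_mult[symmetric] using T by (simp add: field_simps)
    then have "z ^ T = 1" by simp
    have "z \<noteq> 1"
    proof
      assume "z = 1"
      then have "int T dvd k" unfolding z_def by (rule exp_two_pi_frac_eq_1_imp_dvd[OF T])
      moreover have "k \<noteq> 0" "\<bar>k\<bar> < int T" using False assms by (auto simp: k_def)
      ultimately show False using dvd_imp_le_int[of k "int T"] by simp
    qed
    have "(\<Sum>f\<in>{1..T}. z ^ f) = z * (\<Sum>f<T. z ^ f)"
      by (simp add: sum.atLeast1_atMost_eq sum_distrib_left)
    also have "\<dots> = 0" using \<open>z ^ T = 1\<close> \<open>z \<noteq> 1\<close> by (simp add: sum_gp_strict)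
    finally show ?thesis using sum_eq False by simp
  qed
qed

definition orthonormal_cols :: "nat \<Rightarrow> (nat \<Rightarrow> nat \<Rightarrow> real) \<Rightarrow> bool" where
  "orthonormal_cols N U \<longleftrightarrow>
     (\<forall>i\<in>{1..N}. \<forall>j\<in>{1..N}. (\<Sum>k\<in>{1..N}. U k i * U k j) = (if i = j then 1 else 0))"

lemma orthonormal_cols_imp_orthonormal_rows:
  assumes "orthonormal_cols N U" "v \<in> {1..N}" "v' \<in> {1..N}"
  shows "(\<Sum>i\<in>{1..N}. U v i * U v' i) = (if v = v' then 1 else 0)"
proof -
  \<comment> \<open>A = transpose of U and B = U as 0-based matrices; a one-sided inverse of a square matrix is two-sided.\<close>
  define A :: "real mat" where "A = mat N N (\<lambda>(r, c). U (Suc c) (Suc r))"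
  define B :: "real mat" where "B = mat N N (\<lambda>(r, c). U (Suc r) (Suc c))"
  have shift: "(\<Sum>k\<in>{1..N}. g k) = (\<Sum>k\<in>{0..<N}. g (Suc k))" for g :: "nat \<Rightarrow> real"
    by (simp add: sum.atLeast1_atMost_eq atLeast0LessThan)
  have AB: "A * B = 1\<^sub>m N"
  proof (rule eq_matI)
    fix r c assume rc: "r < dim_row (1\<^sub>m N)" "c < dim_col (1\<^sub>m N)"
    have "(A * B) $$ (r, c) = (\<Sum>k\<in>{1..N}. U k (Suc r) * U k (Suc c))"
      using rc shift[of "\<lambda>k. U k (Suc r) * U k (Suc c)"] by (simp add: A_def B_def scalar_prod_def)
    also have "\<dots> = 1\<^sub>m N $$ (r, c)"
      using assms(1) rc by (simp add: orthonormal_cols_def)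
    finally show "(A * B) $$ (r, c) = 1\<^sub>m N $$ (r, c)" .
  qed (simp_all add: A_def B_def)
  have BA: "B * A = 1\<^sub>m N"
    by (rule mat_mult_left_right_inverse[OF _ _ AB]) (simp_all add: A_def B_def)
  have v: "Suc (v - 1) = v" "Suc (v' - 1) = v'" "v - 1 < N" "v' - 1 < N"
    using assms(2,3) by auto
  have "(B * A) $$ (v - 1, v' - 1) = (\<Sum>i\<in>{1..N}. U v i * U v' i)"
    using v shift[of "\<lambda>i. U v i * U v' i"] by (simp add: A_def B_def scalar_prod_def)
  moreover have "(B * A) $$ (v - 1, v' - 1) = (if v = v' then 1 else 0)"
    using BA v(3,4) assms(2,3) by auto
  ultimately show ?thesis by simp
qed

lemma JFT_inverse:
  assumes "orthonormal_cols N U" "v \<in> {1..N}" "n \<in> {1..T}"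
  shows "X v n = (\<Sum>i\<in>{1..N}. of_real (U v i) * (\<Sum>f\<in>{1..T}. JFT N T U X i f * dftU T n f))"
proof -
  have dft: "(\<Sum>f\<in>{1..T}. dftH T f n' * dftU T n f) = (if n' = n then 1 else 0)" if "n' \<in> {1..T}" for n'
    using dft_orthogonality[OF that assms(3)] .
  have time: "(\<Sum>f\<in>{1..T}. JFT N T U X i f * dftU T n f) = (\<Sum>v'\<in>{1..N}. of_real (U v' i) * X v' n)" for i
  proof -
    have "(\<Sum>f\<in>{1..T}. JFT N T U X i f * dftU T n f) =
        (\<Sum>f\<in>{1..T}. \<Sum>v'\<in>{1..N}. \<Sum>n'\<in>{1..T}. of_real (U v' i) * X v' n' * (dftH T f n' * dftU T n f))"
      by (simp add: JFT_def dftU_def sum_distrib_right mult.assoc)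
    also have "\<dots> = (\<Sum>v'\<in>{1..N}. \<Sum>n'\<in>{1..T}.
        of_real (U v' i) * X v' n' * (\<Sum>f\<in>{1..T}. dftH T f n' * dftU T n f))"
      by (subst sum.swap, rule sum.cong[OF refl], subst sum.swap) (simp add: sum_distrib_left)
    also have "\<dots> = (\<Sum>v'\<in>{1..N}. \<Sum>n'\<in>{1..T}. if n' = n then of_real (U v' i) * X v' n' else 0)"
      by (intro sum.cong refl) (simp only: dft, simp)
    also have "\<dots> = (\<Sum>v'\<in>{1..N}. of_real (U v' i) * X v' n)"
      using assms(3) by simp
    finally show ?thesis .
  qed
  have "(\<Sum>i\<in>{1..N}. of_real (U v i) * (\<Sum>f\<in>{1..T}. JFT N T U X i f * dftU T n f)) =
      (\<Sum>i\<in>{1..N}. \<Sum>v'\<in>{1..N}. of_real (U v i * U v' i) * X v' n)"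
    unfolding time by (simp add: sum_distrib_left mult.assoc)
  also have "\<dots> = (\<Sum>v'\<in>{1..N}. of_real (\<Sum>i\<in>{1..N}. U v i * U v' i) * X v' n)"
    by (subst sum.swap) (simp add: sum_distrib_right)
  also have "\<dots> = (\<Sum>v'\<in>{1..N}. if v = v' then X v' n else 0)"
    by (intro sum.cong refl) (simp only: orthonormal_cols_imp_orthonormal_rows[OF assms(1,2)], simp)
  also have "\<dots> = X v n"
    using assms(2) by simp
  finally show ?thesis by simp
qed

lemma BL_F_expansion:
  assumes "orthonormal_cols N U" "\<forall>i\<in>{1..N}. F i \<subseteq> {1..T}" "X \<in> BL_F N T U F"
    and "v \<in> {1..N}" "n \<in> {1..T}"
  shows "X v n = (\<Sum>i\<in>{1..N}. of_real (U v i) * (\<Sum>f\<in>F i. JFT N T U X i f * dftU T n f))"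
proof -
  have "(\<Sum>f\<in>{1..T}. JFT N T U X i f * dftU T n f) = (\<Sum>f\<in>F i. JFT N T U X i f * dftU T n f)"
    if "i \<in> {1..N}" for i
    by (rule sum.mono_neutral_right) (use assms(2,3) that in \<open>auto simp: BL_F_def\<close>)
  then show ?thesis
    using JFT_inverse[OF assms(1,4,5), of X] by simp
qed

lemma exists_vertex_norming_set_BL_F:
  assumes "orthonormal_cols N U" "\<forall>i\<in>{1..N}. F i \<subseteq> {1..T}"
  shows "\<exists>G C. G \<subseteq> {1..N} \<and> card G \<le> graph_bandwidth N F \<and> C \<ge> 0 \<and>
    (\<forall>X\<in>BL_F N T U F. sqnorm N T X \<le> C * sqnorm_on (G \<times> {1..T}) (case_prod X))"
proof -
  let ?I = "{i\<in>{1..N}. F i \<noteq> {}}"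
  let ?V = "{(\<lambda>v. X v n) |X n. X \<in> BL_F N T U F \<and> n \<in> {1..T}}"
  have column: "X v n = (\<Sum>i\<in>?I. (\<Sum>f\<in>F i. JFT N T U X i f * dftU T n f) * of_real (U v i))"
    if "X \<in> BL_F N T U F" "v \<in> {1..N}" "n \<in> {1..T}" for X v n
  proof -
    have "X v n = (\<Sum>i\<in>{1..N}. (\<Sum>f\<in>F i. JFT N T U X i f * dftU T n f) * of_real (U v i))"
      using BL_F_expansion[OF assms that] by (simp add: mult.commute)
    also have "\<dots> = (\<Sum>i\<in>?I. (\<Sum>f\<in>F i. JFT N T U X i f * dftU T n f) * of_real (U v i))"
      by (rule sum.mono_neutral_right) auto
    finally show ?thesis .
  qed
  have "\<exists>c. \<forall>v\<in>{1..N}. x v = (\<Sum>i\<in>?I. c i * of_real (U v i))" if "x \<in> ?V" for x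
  proof -
    from that obtain X n where "x = (\<lambda>v. X v n)" "X \<in> BL_F N T U F" "n \<in> {1..T}" by blast
    then show ?thesis
      using column by (intro exI[of _ "\<lambda>i. \<Sum>f\<in>F i. JFT N T U X i f * dftU T n f"]) simp
  qed
  then obtain G C where G: "G \<subseteq> {1..N}" "card G \<le> card ?I" "C \<ge> 0"
    and bound: "\<forall>x\<in>?V. sqnorm_on {1..N} x \<le> C * sqnorm_on G x"
    using exists_norming_subset[of "{1..N}" ?I ?V "\<lambda>i v. of_real (U v i)"] by auto
  have "sqnorm N T X \<le> C * sqnorm_on (G \<times> {1..T}) (case_prod X)" if "X \<in> BL_F N T U F" for X
  proof -
    have "sqnorm N T X = (\<Sum>n\<in>{1..T}. sqnorm_on {1..N} (\<lambda>v. X v n))"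
      by (simp add: sqnorm_eq_sqnorm_on sqnorm_on_Times)
    also have "\<dots> \<le> (\<Sum>n\<in>{1..T}. C * sqnorm_on G (\<lambda>v. X v n))"
    proof (rule sum_mono)
      fix n assume "n \<in> {1..T}"
      then have "(\<lambda>v. X v n) \<in> ?V" using that by blast
      then show "sqnorm_on {1..N} (\<lambda>v. X v n) \<le> C * sqnorm_on G (\<lambda>v. X v n)"
        using bound by blast
    qed
    also have "\<dots> = C * sqnorm_on (G \<times> {1..T}) (case_prod X)"
      by (simp add: sqnorm_on_Times sum_distrib_left)
    finally show ?thesis .
  qed
  with G show ?thesis
    unfolding graph_bandwidth_def by blast
qed

lemma finite_Sigma_bands:
  assumes "\<forall>i\<in>{1..N}. F i \<subseteq> {1..T}"
  shows "finite (Sigma {1..N} F)" and "card (Sigma {1..N} F) = joint_bandwidth N F"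
proof -
  have fin: "\<forall>i\<in>{1..N}. finite (F i)"
    using assms by (meson finite_atLeastAtMost finite_subset)
  then show "finite (Sigma {1..N} F)"
    by (intro finite_SigmaI) auto
  show "card (Sigma {1..N} F) = joint_bandwidth N F"
    unfolding joint_bandwidth_def by (rule card_SigmaI[OF finite_atLeastAtMost fin])
qed

lemma exists_norming_subset_BL_F:
  assumes "orthonormal_cols N U" "\<forall>i\<in>{1..N}. F i \<subseteq> {1..T}" "D \<subseteq> {1..N} \<times> {1..T}"
  shows "\<exists>S C. S \<subseteq> D \<and> card S \<le> joint_bandwidth N F \<and> C \<ge> 0 \<and>
    (\<forall>X\<in>BL_F N T U F. sqnorm_on D (case_prod X) \<le> C * sqnorm_on S (case_prod X))"
proof -
  let ?J = "Sigma {1..N} F"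
  let ?w = "\<lambda>j p. of_real (U (fst p) (fst j)) * dftU T (snd p) (snd j)"
  have "finite D" by (rule finite_subset[OF assms(3)]) simp
  have fin: "\<forall>i\<in>{1..N}. finite (F i)"
    using assms(2) by (meson finite_atLeastAtMost finite_subset)
  have atoms: "X v n = (\<Sum>j\<in>?J. JFT N T U X (fst j) (snd j) * ?w j (v, n))"
    if "X \<in> BL_F N T U F" "v \<in> {1..N}" "n \<in> {1..T}" for X v n
  proof -
    have "X v n = (\<Sum>i\<in>{1..N}. \<Sum>f\<in>F i. JFT N T U X i f * (of_real (U v i) * dftU T n f))"
      using BL_F_expansion[OF assms(1,2) that] by (simp add: sum_distrib_left mult_ac)
    also have "\<dots> = (\<Sum>(i, f)\<in>?J. JFT N T U X i f * (of_real (U v i) * dftU T n f))"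
      by (rule sum.Sigma[OF finite_atLeastAtMost fin])
    finally show ?thesis
      by (simp add: case_prod_unfold)
  qed
  have span: "\<exists>c. \<forall>p\<in>D. x p = (\<Sum>j\<in>?J. c j * ?w j p)" if "x \<in> case_prod ` BL_F N T U F" for x
  proof -
    from that obtain X where X: "x = case_prod X" "X \<in> BL_F N T U F" by blast
    show ?thesis
    proof (intro exI ballI)
      fix p assume "p \<in> D"
      then obtain v n where p: "p = (v, n)" "v \<in> {1..N}" "n \<in> {1..T}" using assms(3) by blast
      have "x p = X v n" using X(1) p(1) by simp
      also have "\<dots> = (\<Sum>j\<in>?J. JFT N T U X (fst j) (snd j) * ?w j (v, n))"
        by (rule atoms[OF X(2) p(2,3)])
      finally show "x p = (\<Sum>j\<in>?J. JFT N T U X (fst j) (snd j) * ?w j p)"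
        using p(1) by simp
    qed
  qed
  obtain S C where S: "S \<subseteq> D" "card S \<le> card ?J" "C \<ge> 0"
    and bound: "\<forall>x\<in>case_prod ` BL_F N T U F. sqnorm_on D x \<le> C * sqnorm_on S x"
    using exists_norming_subset[where V = "case_prod ` BL_F N T U F" and w = ?w,
        OF \<open>finite D\<close> finite_Sigma_bands(1)[OF assms(2)] span]
    by blast
  have "\<forall>X\<in>BL_F N T U F. sqnorm_on D (case_prod X) \<le> C * sqnorm_on S (case_prod X)"
    using bound by simp
  then show ?thesis
    using S finite_Sigma_bands(2)[OF assms(2)] by (intro exI[of _ S] exI[of _ C]) simp
qed

lemma exists_norming_set_BL_F:
  assumes "orthonormal_cols N U" "\<forall>i\<in>{1..N}. F i \<subseteq> {1..T}"
  shows "\<exists>G S C. G \<subseteq> {1..N} \<and> card G \<le> graph_bandwidth N F \<and> S \<subseteq> G \<times> {1..T} \<and>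
    card S \<le> joint_bandwidth N F \<and> C \<ge> 0 \<and>
    (\<forall>X\<in>BL_F N T U F. sqnorm N T X \<le> C * sqnorm_on S (case_prod X))"
proof -
  obtain G C\<^sub>G where G: "G \<subseteq> {1..N}" "card G \<le> graph_bandwidth N F" "C\<^sub>G \<ge> 0"
    and vertex_bound: "\<forall>X\<in>BL_F N T U F. sqnorm N T X \<le> C\<^sub>G * sqnorm_on (G \<times> {1..T}) (case_prod X)"
    using exists_vertex_norming_set_BL_F[OF assms] by blast
  have grid: "G \<times> {1..T} \<subseteq> {1..N} \<times> {1..T}"
    using G(1) by blast
  obtain S C where S: "S \<subseteq> G \<times> {1..T}" "card S \<le> joint_bandwidth N F" "C \<ge> 0"
    and time_bound: "\<forall>X\<in>BL_F N T U F. sqnorm_on (G \<times> {1..T}) (case_prod X) \<le> C * sqnorm_on S (case_prod X)"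
    using exists_norming_subset_BL_F[OF assms grid] by blast
  have "\<forall>X\<in>BL_F N T U F. sqnorm N T X \<le> C\<^sub>G * C * sqnorm_on S (case_prod X)"
  proof
    fix X assume X: "X \<in> BL_F N T U F"
    have "sqnorm N T X \<le> C\<^sub>G * sqnorm_on (G \<times> {1..T}) (case_prod X)"
      using vertex_bound X by blast
    also have "\<dots> \<le> C\<^sub>G * (C * sqnorm_on S (case_prod X))"
      using time_bound X by (intro mult_left_mono[OF _ G(3)]) blast
    finally show "sqnorm N T X \<le> C\<^sub>G * C * sqnorm_on S (case_prod X)"
      by (simp add: mult.assoc)
  qed
  moreover have "C\<^sub>G * C \<ge> 0"
    using G(3) S(3) by simp
  ultimately show ?thesis
    using G(1,2) S(1,2) by (intro exI[of _ G] exI[of _ S] exI[of _ "C\<^sub>G * C"]) simp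
qed

lemma stable_sampling_if_norming:
  assumes "S \<subseteq> {1..N} \<times> {1..T}" "C \<ge> 0"
    and "\<forall>X\<in>Sp. sqnorm N T X \<le> C * sqnorm_on S (case_prod X)"
  shows "stable_sampling N T Sp S"
proof -
  have samples: "(\<Sum>(v, n)\<in>S. (cmod (X v n))\<^sup>2) = sqnorm_on S (case_prod X)" for X :: "nat \<Rightarrow> nat \<Rightarrow> complex"
    by (simp add: sqnorm_on_def case_prod_unfold)
  have "1 / (C + 1) * sqnorm N T X \<le> sqnorm_on S (case_prod X)" if "X \<in> Sp" for X
  proof -
    have "1 / (C + 1) * sqnorm N T X \<le> 1 / (C + 1) * (C * sqnorm_on S (case_prod X))"
      using assms(2,3) that by (intro mult_left_mono) auto
    also have "\<dots> \<le> sqnorm_on S (case_prod X)"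
      using assms(2) sqnorm_on_nonneg[of S "case_prod X"] by (simp add: field_simps)
    finally show ?thesis .
  qed
  moreover have "sqnorm_on S (case_prod X) \<le> 1 * sqnorm N T X" for X
    using assms(1) by (simp add: sqnorm_eq_sqnorm_on sqnorm_on_mono)
  ultimately show ?thesis
    unfolding stable_sampling_def samples using assms(2)
    by (intro exI[of _ "1 / (C + 1)"] exI[of _ 1]) simp
qed

lemma joint_bandwidth_le_graph_bandwidth_mult:
  assumes "\<forall>i\<in>{1..N}. F i \<subseteq> {1..T}"
  shows "joint_bandwidth N F \<le> graph_bandwidth N F * T"
proof -
  have "joint_bandwidth N F = (\<Sum>i\<in>{i\<in>{1..N}. F i \<noteq> {}}. card (F i))"
    unfolding joint_bandwidth_def by (rule sum.mono_neutral_right) auto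
  also have "\<dots> \<le> (\<Sum>i\<in>{i\<in>{1..N}. F i \<noteq> {}}. T)"
  proof (rule sum_mono)
    fix i assume "i \<in> {i\<in>{1..N}. F i \<noteq> {}}"
    then show "card (F i) \<le> T"
      using assms card_mono[of "{1..T}" "F i"] by simp
  qed
  finally show ?thesis
    by (simp add: graph_bandwidth_def)
qed

lemma exists_critical_norming_set_BL_F:
  assumes "orthonormal_cols N U" "\<forall>i\<in>{1..N}. F i \<subseteq> {1..T}"
  shows "\<exists>S C. S \<subseteq> {1..N} \<times> {1..T} \<and> card S = joint_bandwidth N F \<and>
    card (fst ` S) \<le> graph_bandwidth N F \<and> C \<ge> 0 \<and>
    (\<forall>X\<in>BL_F N T U F. sqnorm N T X \<le> C * sqnorm_on S (case_prod X))"
proof -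
  obtain G S C where G: "G \<subseteq> {1..N}" "card G \<le> graph_bandwidth N F"
    and S: "S \<subseteq> G \<times> {1..T}" "card S \<le> joint_bandwidth N F" and "C \<ge> 0"
    and bound: "\<forall>X\<in>BL_F N T U F. sqnorm N T X \<le> C * sqnorm_on S (case_prod X)"
    using exists_norming_set_BL_F[OF assms] by blast
  have "graph_bandwidth N F \<le> card {1..N}"
    unfolding graph_bandwidth_def by (intro card_mono) auto
  then obtain G' where G': "G \<subseteq> G'" "G' \<subseteq> {1..N}" "card G' = graph_bandwidth N F"
    using exists_subset_between[OF G(2) _ G(1) finite_atLeastAtMost] by blast
  have "joint_bandwidth N F \<le> card (G' \<times> {1..T})"
    using joint_bandwidth_le_graph_bandwidth_mult[OF assms(2)] G'(3) by (simp add: card_cartesian_product)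
  moreover have "S \<subseteq> G' \<times> {1..T}"
    using S(1) G'(1) by blast
  moreover have "finite (G' \<times> {1..T})"
    using finite_subset[OF G'(2)] by simp
  ultimately obtain S' where S': "S \<subseteq> S'" "S' \<subseteq> G' \<times> {1..T}" "card S' = joint_bandwidth N F"
    using exists_subset_between[OF S(2)] by blast
  have grid: "S' \<subseteq> {1..N} \<times> {1..T}" using S'(2) G'(2) by blast
  have "sqnorm N T X \<le> C * sqnorm_on S' (case_prod X)" if "X \<in> BL_F N T U F" for X
  proof -
    have "sqnorm_on S (case_prod X) \<le> sqnorm_on S' (case_prod X)"
      using S'(1) finite_subset[OF grid] by (simp add: sqnorm_on_mono)
    then show ?thesis
      using bound that mult_left_mono[OF _ \<open>C \<ge> 0\<close>] by (meson order_trans)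
  qed
  moreover have "card (fst ` S') \<le> card G'"
    using S'(2) finite_subset[OF G'(2)] by (intro card_mono) auto
  ultimately show ?thesis
    using grid S'(3) G'(3) \<open>C \<ge> 0\<close> by (intro exI[of _ S'] exI[of _ C]) auto
qed

theorem theorem6:
  fixes N T :: nat and W U :: "nat \<Rightarrow> nat \<Rightarrow> real" and F :: "nat \<Rightarrow> nat set"
  assumes "N \<ge> 1" and "T \<ge> 1"
    and "undirected_graph N W"
    and "orthonormal_laplacian_eigvecs N W U"
    and "\<forall>i\<in>{1..N}. F i \<subseteq> {1..T}"
    and "joint_bandwidth N F < N * T"
  shows "\<exists>S. S \<subseteq> {1..N} \<times> {1..T} \<and>
             stable_sampling N T (BL_F N T U F) S \<and>
             card S = joint_bandwidth N F \<and>
             sampling_ratio N T S = real (joint_bandwidth N F) / (real N * real T) \<and>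
             card (fst ` S) \<le> graph_bandwidth N F"
proof -
  have U: "orthonormal_cols N U"
    using assms(4) by (simp add: orthonormal_laplacian_eigvecs_def orthonormal_cols_def)
  obtain S C where S: "S \<subseteq> {1..N} \<times> {1..T}" "card S = joint_bandwidth N F"
      "card (fst ` S) \<le> graph_bandwidth N F" "C \<ge> 0"
    and bound: "\<forall>X\<in>BL_F N T U F. sqnorm N T X \<le> C * sqnorm_on S (case_prod X)"
    using exists_critical_norming_set_BL_F[OF U assms(5)] by blast
  have "stable_sampling N T (BL_F N T U F) S"
    by (rule stable_sampling_if_norming[OF S(1,4) bound])
  then show ?thesis
    using S(1-3) by (intro exI[of _ S]) (simp add: sampling_ratio_def)
qed

end
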